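(* Let $G=(S,C,H)$ be a thick spider graph with weight $r\ge3$ and $T_H$ an MDNS of $G[H]$. Then: (1) $\tilde\gamma_{gr}^{\times 2}((S_f,C,H))=\tilde\gamma_{gr}^{\times 2}((S_t,C,H))=\tilde\gamma_{gr}^{\times 2}(G)+1=r+3+\tilde\gamma_{gr}^{\times 2}(G[H])$ and $T_H\oplus(s_1,\dots,s_r,s'_r,c_1,c_2)$ is an MDNS of both $(S_f,C,H)$ and $(S_t,C,H)$; (2) $\tilde\gamma_{gr}^{\times 2}((S,C_f,H))=\tilde\gamma_{gr}^{\times 2}((S,C_t,H))=\tilde\gamma_{gr}^{\times 2}(G)=r+2+\tilde\gamma_{gr}^{\times 2}(G[H])$ and $T_H\oplus(s_1,\dots,s_r,c_1,c_2)$ is an MDNS of both $(S,C_f,H)$ and $(S,C_t,H)$.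
   Context: Graphs are finite, simple, undirected; $N(v)$ open, $N[v]$ closed neighborhood. A sequence of distinct vertices $(v_1,\dots,v_k)$ is a double neighborhood sequence (DNS) if for each $i$ some $u\in N[v_i]$ satisfies $|\{j<i:u\in N[v_j]\}|\le 1$; an MDNS is a DNS of maximum length and $\tilde\gamma_{gr}^{\times 2}$ is that length; for the empty graph it is $0$ with the empty sequence. $\oplus$ is concatenation. A spider graph $G=(S,C,H)$: $V(G)$ is partitioned into $S=\{s_1,\dots,s_r\}$ (stable), $C=\{c_1,\dots,c_r\}$ (clique), $H$ (possibly empty), all edges between $C$ and $H$, none between $H$ and $S$; thick means $s_ic_j\in E$ iff $i\neq j$. Quasi-spider graphs: $(S_f,C,H)$ (resp. $(S_t,C,H)$) is obtained by adding a new vertex $s'_r$ with $N(s'_r)=N(s_r)$ (resp. $N[s'_r]=N[s_r]\cup\{s'_r\}$, adjacent to $s_r$); $(S,C_f,H)$ and $(S,C_t,H)$ are obtained analogously by adding a false (resp. true) twin $c'_r$ of $c_r$. *)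

theory Defs
  imports Main
begin

definition simple_graph :: "'a set \<Rightarrow> ('a \<Rightarrow> 'a \<Rightarrow> bool) \<Rightarrow> bool" where
  "simple_graph V E \<longleftrightarrow> finite V \<and> (\<forall>x y. E x y \<longrightarrow> x \<in> V \<and> y \<in> V)
     \<and> (\<forall>x y. E x y \<longrightarrow> E y x) \<and> (\<forall>x. \<not> E x x)"

definition cnbr :: "'a set \<Rightarrow> ('a \<Rightarrow> 'a \<Rightarrow> bool) \<Rightarrow> 'a \<Rightarrow> 'a set" where
  "cnbr V E v = {u \<in> V. u = v \<or> E v u}"

definition is_dns :: "'a set \<Rightarrow> ('a \<Rightarrow> 'a \<Rightarrow> bool) \<Rightarrow> 'a list \<Rightarrow> bool" where
  "is_dns V E xs \<longleftrightarrow> distinct xs \<and> set xs \<subseteq> V \<and>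
     (\<forall>i < length xs. \<exists>u \<in> cnbr V E (xs ! i).
        card {j. j < i \<and> u \<in> cnbr V E (xs ! j)} \<le> 1)"

definition gamma_dns :: "'a set \<Rightarrow> ('a \<Rightarrow> 'a \<Rightarrow> bool) \<Rightarrow> nat" where
  "gamma_dns V E = Max {length xs | xs. is_dns V E xs}"

definition is_mdns :: "'a set \<Rightarrow> ('a \<Rightarrow> 'a \<Rightarrow> bool) \<Rightarrow> 'a list \<Rightarrow> bool" where
  "is_mdns V E xs \<longleftrightarrow> is_dns V E xs \<and> length xs = gamma_dns V E"

definition induced :: "('a \<Rightarrow> 'a \<Rightarrow> bool) \<Rightarrow> 'a set \<Rightarrow> 'a \<Rightarrow> 'a \<Rightarrow> bool" where
  "induced E H x y \<longleftrightarrow> E x y \<and> x \<in> H \<and> y \<in> H"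

definition false_twin_edges :: "('a \<Rightarrow> 'a \<Rightarrow> bool) \<Rightarrow> 'a \<Rightarrow> 'a \<Rightarrow> 'a \<Rightarrow> 'a \<Rightarrow> bool" where
  "false_twin_edges E v w x y \<longleftrightarrow> E x y \<or> (x = w \<and> E v y) \<or> (y = w \<and> E x v)"

definition true_twin_edges :: "('a \<Rightarrow> 'a \<Rightarrow> bool) \<Rightarrow> 'a \<Rightarrow> 'a \<Rightarrow> 'a \<Rightarrow> 'a \<Rightarrow> bool" where
  "true_twin_edges E v w x y \<longleftrightarrow> false_twin_edges E v w x y \<or> (x = w \<and> y = v) \<or> (x = v \<and> y = w)"

definition thick_spider ::
  "'a set \<Rightarrow> ('a \<Rightarrow> 'a \<Rightarrow> bool) \<Rightarrow> nat \<Rightarrow> (nat \<Rightarrow> 'a) \<Rightarrow> (nat \<Rightarrow> 'a) \<Rightarrow> 'a set \<Rightarrow> bool" where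
  "thick_spider V E r s c H \<longleftrightarrow> simple_graph V E
     \<and> inj_on s {1..r} \<and> inj_on c {1..r}
     \<and> s ` {1..r} \<inter> c ` {1..r} = {} \<and> s ` {1..r} \<inter> H = {} \<and> c ` {1..r} \<inter> H = {}
     \<and> V = s ` {1..r} \<union> c ` {1..r} \<union> H
     \<and> (\<forall>i\<in>{1..r}. \<forall>j\<in>{1..r}. \<not> E (s i) (s j))
     \<and> (\<forall>i\<in>{1..r}. \<forall>j\<in>{1..r}. i \<noteq> j \<longrightarrow> E (c i) (c j))
     \<and> (\<forall>i\<in>{1..r}. \<forall>h\<in>H. E (c i) h)
     \<and> (\<forall>i\<in>{1..r}. \<forall>h\<in>H. \<not> E (s i) h)
     \<and> (\<forall>i\<in>{1..r}. \<forall>j\<in>{1..r}. E (s i) (c j) \<longleftrightarrow> i \<noteq> j)"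

end

theory Submission
  imports Defs
begin

(* Let D be a DNS of a graph whose vertices split into S, C, H with C complete and S anticomplete
   to H; all five graphs of the theorem have this shape. The entries of D in H form a DNS of G[H].
   For the other entries, look at the prefix P of D that ends with the second vertex of C in D.
   From then on every vertex of H, and every vertex of C except possibly a twin, has two vertices
   of P in its closed neighbourhood and witnesses no later entry, while any vertex u witnesses at
   most 2 minus the number of vertices of P in N[u] later entries. Counting the witnesses in S
   bounds the entries outside H by |S| + 2. The one configuration allowing |S| + 3, when c_r has a
   twin and both twins lie in P, forces the witness of the second twin to be a vertex of H whose
   closed neighbourhood misses D, so the H-part of D is then not maximum. Conversely, T followed
   by s_1, ..., s_r (and the twin w of s_r), c_1, c_2 is a DNS of the required length. *)

section \<open>Double neighbourhood sequences\<close>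


lemma mem_cnbr_iff: "u \<in> cnbr V E v \<longleftrightarrow> u \<in> V \<and> (u = v \<or> E v u)"
  by (simp add: cnbr_def)

lemma cnbr_commute:
  assumes "simple_graph V E" "v \<in> V"
  shows "u \<in> cnbr V E v \<longleftrightarrow> v \<in> cnbr V E u"
  using assms by (auto simp: cnbr_def simple_graph_def)

lemma card_covering_prefix:
  assumes "simple_graph V E" "distinct xs" "set xs \<subseteq> V" "i \<le> length xs" "u \<in> V"
  shows "card {j. j < i \<and> u \<in> cnbr V E (xs ! j)} = card (set (take i xs) \<inter> cnbr V E u)"
proof -
  have "inj_on (nth xs) {j. j < i \<and> u \<in> cnbr V E (xs ! j)}"
    using assms(2,4) by (auto simp: inj_on_def nth_eq_iff_index_eq)
  moreover have "nth xs ` {j. j < i \<and> u \<in> cnbr V E (xs ! j)} = set (take i xs) \<inter> cnbr V E u"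
    using assms nth_image[OF assms(4)] cnbr_commute[OF assms(1)] by (fastforce simp: subset_iff)
  ultimately show ?thesis by (metis card_image)
qed

definition dns_witness :: "'a set \<Rightarrow> ('a \<Rightarrow> 'a \<Rightarrow> bool) \<Rightarrow> 'a list \<Rightarrow> nat \<Rightarrow> 'a \<Rightarrow> bool" where
  "dns_witness V E xs i u \<longleftrightarrow> xs ! i \<in> cnbr V E u \<and> card (set (take i xs) \<inter> cnbr V E u) \<le> 1"

lemma is_dns_iff_witness:
  assumes sg: "simple_graph V E"
  shows "is_dns V E xs \<longleftrightarrow> distinct xs \<and> set xs \<subseteq> V \<and>
     (\<forall>i < length xs. \<exists>u \<in> V. dns_witness V E xs i u)"
proof -
  have "(\<exists>u \<in> cnbr V E (xs ! i). card {j. j < i \<and> u \<in> cnbr V E (xs ! j)} \<le> 1)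
      \<longleftrightarrow> (\<exists>u \<in> V. dns_witness V E xs i u)"
    if "distinct xs" "set xs \<subseteq> V" "i < length xs" for i
  proof -
    have xi: "xs ! i \<in> V" using that by auto
    have card_eq: "card {j. j < i \<and> u \<in> cnbr V E (xs ! j)} = card (set (take i xs) \<inter> cnbr V E u)"
      if "u \<in> V" for u
      using card_covering_prefix[OF sg \<open>distinct xs\<close> \<open>set xs \<subseteq> V\<close>] \<open>i < length xs\<close> that by simp
    have mem: "u \<in> cnbr V E (xs ! i) \<longleftrightarrow> u \<in> V \<and> xs ! i \<in> cnbr V E u" for u
      using cnbr_commute[OF sg xi] by (auto simp: cnbr_def)
    show ?thesis
      unfolding dns_witness_def Bex_def using card_eq mem by (metis (no_types, lifting))
  qed
  then show ?thesis unfolding is_dns_def by (auto cong: conj_cong)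
qed

lemma dns_witness_snoc_last:
  "dns_witness V E (xs @ [x]) (length xs) u \<longleftrightarrow> x \<in> cnbr V E u \<and> card (set xs \<inter> cnbr V E u) \<le> 1"
  by (simp add: dns_witness_def)

lemma dns_witness_snoc:
  "i < length xs \<Longrightarrow> dns_witness V E (xs @ [x]) i u \<longleftrightarrow> dns_witness V E xs i u"
  by (simp add: dns_witness_def nth_append)

lemma is_dns_snoc:
  assumes "simple_graph V E"
  shows "is_dns V E (xs @ [x]) \<longleftrightarrow> is_dns V E xs \<and> x \<notin> set xs \<and> x \<in> V \<and>
     (\<exists>u \<in> V. x \<in> cnbr V E u \<and> card (set xs \<inter> cnbr V E u) \<le> 1)"
  unfolding is_dns_iff_witness[OF assms]
  by (auto simp: less_Suc_eq dns_witness_snoc dns_witness_snoc_last)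

lemma is_dns_Nil: "is_dns V E []"
  by (simp add: is_dns_def)

lemma finite_dns_lengths:
  assumes "simple_graph V E"
  shows "finite {length xs | xs. is_dns V E xs}"
proof (rule finite_subset)
  have "length xs \<le> card V" if "is_dns V E xs" for xs
    using that assms distinct_card[of xs] card_mono[of V "set xs"]
    by (simp add: is_dns_def simple_graph_def)
  then show "{length xs | xs. is_dns V E xs} \<subseteq> {..card V}" by auto
qed simp

lemma length_le_gamma_dns:
  assumes "simple_graph V E" "is_dns V E xs"
  shows "length xs \<le> gamma_dns V E"
  unfolding gamma_dns_def using assms by (auto intro!: Max_ge finite_dns_lengths)

lemma gamma_dns_le:
  assumes "simple_graph V E" "\<And>xs. is_dns V E xs \<Longrightarrow> length xs \<le> n"
  shows "gamma_dns V E \<le> n"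
  unfolding gamma_dns_def using assms is_dns_Nil
  by (subst Max_le_iff) (auto intro: finite_dns_lengths)

lemma is_mdnsI:
  assumes "simple_graph V E" "is_dns V E xs" "\<And>ys. is_dns V E ys \<Longrightarrow> length ys \<le> length xs"
  shows "is_mdns V E xs"
  using assms by (simp add: is_mdns_def antisym gamma_dns_le length_le_gamma_dns)

lemma is_dns_induced_supergraph:
  assumes G: "simple_graph V E" and G': "simple_graph V' E'" and sub: "V \<subseteq> V'"
    and agree: "\<And>x y. x \<in> V \<Longrightarrow> y \<in> V \<Longrightarrow> E' x y \<longleftrightarrow> E x y"
    and xs: "is_dns V E xs"
  shows "is_dns V' E' xs"
proof -
  have cnbr_eq: "cnbr V' E' u \<inter> V = cnbr V E u" if "u \<in> V" for u
    using that sub agree G by (auto simp: cnbr_def simple_graph_def)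
  have "dns_witness V' E' xs i u" if "i < length xs" "u \<in> V" "dns_witness V E xs i u" for i u
  proof -
    have "set (take i xs) \<subseteq> V" using xs set_take_subset[of i xs] by (auto simp: is_dns_def)
    then have "set (take i xs) \<inter> cnbr V' E' u = set (take i xs) \<inter> cnbr V E u"
      using cnbr_eq[OF that(2)] by blast
    moreover have "xs ! i \<in> cnbr V' E' u"
      using that(3) cnbr_eq[OF that(2)] by (auto simp: dns_witness_def)
    ultimately show ?thesis using that(3) by (simp add: dns_witness_def)
  qed
  then show ?thesis
    using xs sub unfolding is_dns_iff_witness[OF G] is_dns_iff_witness[OF G'] by blast
qed

lemma is_dns_append_isolated:
  assumes G: "simple_graph V E" and xs: "is_dns V E xs"
    and ys: "distinct ys" "set ys \<subseteq> V" "set ys \<inter> set xs = {}"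
    and isolated: "\<And>y z. y \<in> set ys \<Longrightarrow> z \<in> set xs \<union> set ys \<Longrightarrow> \<not> E y z"
  shows "is_dns V E (xs @ ys)"
  using ys isolated
proof (induction ys rule: rev_induct)
  case (snoc y ys)
  have "set (xs @ ys) \<inter> cnbr V E y = {}"
    using snoc.prems by (auto simp: mem_cnbr_iff)
  then show ?case
    using snoc by (auto simp: is_dns_snoc[OF G] mem_cnbr_iff simp flip: append_assoc intro!: bexI[of _ y])
qed (use xs in simp)

lemma is_dns_snocI:
  assumes G: "simple_graph V E" and xs: "is_dns V E xs" and x: "x \<notin> set xs" "x \<in> cnbr V E u"
    and u: "u \<in> V" "set xs \<inter> cnbr V E u \<subseteq> {v}"
  shows "is_dns V E (xs @ [x])"
  using card_mono[OF _ u(2)] xs x u(1) by (auto simp: is_dns_snoc[OF G] mem_cnbr_iff)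

lemma simple_graph_induced:
  assumes "simple_graph V E" "H \<subseteq> V"
  shows "simple_graph H (induced E H)"
  using assms by (auto simp: simple_graph_def induced_def intro: finite_subset)

lemma cnbr_induced:
  assumes "H \<subseteq> V" "v \<in> H"
  shows "cnbr H (induced E H) v = cnbr V E v \<inter> H"
  using assms by (auto simp: cnbr_def induced_def)

lemma is_dns_filter_induced:
  assumes sg: "simple_graph V E" and HV: "H \<subseteq> V" and D: "is_dns V E D"
    and attached: "\<And>h u h'. h \<in> H \<Longrightarrow> h' \<in> H \<Longrightarrow> u \<notin> H \<Longrightarrow> E h u \<Longrightarrow> E u h'"
  shows "is_dns H (induced E H) (filter (\<lambda>x. x \<in> H) D)"
  using D
proof (induction D rule: rev_induct)
  case Nil
  then show ?case by (simp add: is_dns_Nil)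
next
  case (snoc x xs)
  have sgH: "simple_graph H (induced E H)" by (rule simple_graph_induced[OF sg HV])
  from snoc.prems obtain u where xs: "is_dns V E xs" "x \<notin> set xs" "x \<in> V"
    and u: "u \<in> V" "x \<in> cnbr V E u" "card (set xs \<inter> cnbr V E u) \<le> 1"
    by (auto simp: is_dns_snoc[OF sg])
  let ?xsH = "filter (\<lambda>x. x \<in> H) xs"
  show ?case
  proof (cases "x \<in> H")
    case xH: True
    have "\<exists>u' \<in> H. x \<in> cnbr H (induced E H) u' \<and> set ?xsH \<inter> cnbr H (induced E H) u' \<subseteq> set xs \<inter> cnbr V E u"
    proof (cases "u \<in> H")
      case True
      then show ?thesis using u xH HV cnbr_induced[OF HV] by auto
    next
      case False
      then have "E x u" using u xH sg by (auto simp: mem_cnbr_iff simple_graph_def)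
      then have "H \<subseteq> cnbr V E u" using attached[OF xH _ False] HV by (auto simp: mem_cnbr_iff)
      then show ?thesis using xH HV cnbr_induced[OF HV xH] by (intro bexI[of _ x]) (auto simp: mem_cnbr_iff)
    qed
    then obtain u' where "u' \<in> H" "x \<in> cnbr H (induced E H) u'"
      "card (set ?xsH \<inter> cnbr H (induced E H) u') \<le> 1"
      using u(3) card_mono[of "set xs \<inter> cnbr V E u"] by (meson List.finite_set finite_Int le_trans)
    then show ?thesis using snoc.IH xs xH by (auto simp: is_dns_snoc[OF sgH])
  qed (use snoc.IH xs in simp)
qed

lemma length_filter_induced_lt_gamma_dns:
  assumes sg: "simple_graph V E" and HV: "H \<subseteq> V" and D: "is_dns V E D"
    and attached: "\<And>h u h'. h \<in> H \<Longrightarrow> h' \<in> H \<Longrightarrow> u \<notin> H \<Longrightarrow> E h u \<Longrightarrow> E u h'"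
    and h0: "h0 \<in> H" "set D \<inter> H \<inter> cnbr V E h0 = {}"
  shows "length (filter (\<lambda>x. x \<in> H) D) < gamma_dns H (induced E H)"
proof -
  have sgH: "simple_graph H (induced E H)" by (rule simple_graph_induced[OF sg HV])
  have "h0 \<in> cnbr V E h0" using h0 HV by (auto simp: mem_cnbr_iff)
  then have "h0 \<notin> set D" using h0 by blast
  moreover have "set (filter (\<lambda>x. x \<in> H) D) \<inter> cnbr H (induced E H) h0 = {}"
    using h0 cnbr_induced[OF HV h0(1)] by auto
  ultimately have "is_dns H (induced E H) (filter (\<lambda>x. x \<in> H) D @ [h0])"
    using is_dns_filter_induced[OF sg HV D attached] h0(1)
    by (auto simp: is_dns_snoc[OF sgH] mem_cnbr_iff intro!: bexI[of _ h0])
  from length_le_gamma_dns[OF sgH this] show ?thesis by simp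
qed

lemma card_witnessed_after_le:
  assumes D: "is_dns V E D" and p: "p \<le> length D"
    and uniform: "\<And>i u u'. p \<le> i \<Longrightarrow> i < length D \<Longrightarrow> u \<in> U \<Longrightarrow> u' \<in> U \<Longrightarrow>
       D ! i \<in> cnbr V E u \<Longrightarrow> D ! i \<in> cnbr V E u'"
    and covered: "\<And>u. u \<in> U \<Longrightarrow> k \<le> card (set (take p D) \<inter> cnbr V E u)"
  shows "card {i. p \<le> i \<and> i < length D \<and> (\<exists>u\<in>U. dns_witness V E D i u)} \<le> 2 - k"
    (is "card ?A \<le> _")
proof (cases "?A = {}")
  case False
  have dist: "distinct D" using D by (simp add: is_dns_def)
  have finA: "finite ?A" by (rule finite_subset[of _ "{..<length D}"]) auto
  define m where "m = Max ?A"
  have "m \<in> ?A" unfolding m_def using Max_in[OF finA False] .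
  then obtain u where u: "u \<in> U" "dns_witness V E D m u" and pm: "p \<le> m" "m < length D"
    by blast
  have before_m: "i < m" if "i \<in> ?A - {m}" for i
    using that Max_ge[OF finA] unfolding m_def[symmetric] by fastforce
  let ?B1 = "set (take p D) \<inter> cnbr V E u"
  let ?B2 = "nth D ` (?A - {m})"
  have "?B1 \<union> ?B2 \<subseteq> set (take m D) \<inter> cnbr V E u"
  proof -
    have "?B1 \<subseteq> set (take m D) \<inter> cnbr V E u"
      using set_take_subset_set_take[OF pm(1), of D] by blast
    moreover have "D ! i \<in> set (take m D) \<inter> cnbr V E u" if "i \<in> ?A - {m}" for i
      using that before_m[OF that] pm uniform[of i _ u] u(1)
      by (auto simp: in_set_conv_nth dns_witness_def intro!: exI[of _ i])
    ultimately show ?thesis by blast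
  qed
  then have "card (?B1 \<union> ?B2) \<le> 1"
    using u(2) card_mono[of "set (take m D) \<inter> cnbr V E u" "?B1 \<union> ?B2"]
    unfolding dns_witness_def by simp
  moreover have "?B1 \<inter> ?B2 = {}"
  proof (rule ccontr)
    assume "?B1 \<inter> ?B2 \<noteq> {}"
    then obtain i where i: "i \<in> ?A" "D ! i \<in> set (take p D)" by blast
    then obtain j where "j < p" "D ! i = D ! j" using p by (auto simp: in_set_conv_nth)
    then show False using i dist p by (auto simp: nth_eq_iff_index_eq)
  qed
  moreover have "card ?B2 = card ?A - 1"
    using dist finA \<open>m \<in> ?A\<close> card_image[of "nth D" "?A - {m}"]
    by (simp add: inj_on_def nth_eq_iff_index_eq)
  moreover have "k \<le> card ?B1" using covered u(1) by blast
  moreover have "card ?A \<ge> 1" using False finA by (simp add: Suc_le_eq card_gt_0_iff)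
  ultimately show ?thesis by (simp add: card_Un_disjoint)
next
  case True
  then show ?thesis by (metis card.empty zero_le)
qed

lemma split_at_second_member:
  assumes "2 \<le> card (set D \<inter> C)"
  obtains ys q1 q2 zs where "D = ys @ q2 # zs" "set ys \<inter> C = {q1}" "q2 \<in> C" "q1 \<noteq> q2"
proof -
  obtain ys1 q1 rest where D: "D = ys1 @ q1 # rest" "q1 \<in> C" "\<forall>y\<in>set ys1. y \<notin> C"
    using assms split_list_first_propE[of D "\<lambda>x. x \<in> C"]
    by (metis card.empty disjoint_iff_not_equal not_numeral_le_zero)
  have "\<not> set D \<inter> C \<subseteq> {q1}"
    using assms card_mono[of "{q1}" "set D \<inter> C"] by auto
  then have "\<exists>x\<in>set rest. x \<in> C \<and> x \<noteq> q1" using D by auto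
  then obtain ys2 q2 zs where rest: "rest = ys2 @ q2 # zs" "q2 \<in> C" "q2 \<noteq> q1"
    "\<forall>y\<in>set ys2. \<not> (y \<in> C \<and> y \<noteq> q1)"
    by (rule split_list_first_propE) blast
  show ?thesis
    by (rule that[of "ys1 @ q1 # ys2" q2 zs q1]) (use D rest in auto)
qed

section \<open>Spider-shaped graphs\<close>

locale spider_shape =
  fixes V :: "'a set" and E :: "'a \<Rightarrow> 'a \<Rightarrow> bool" and S C H :: "'a set"
  assumes simple: "simple_graph V E"
    and partition: "V = S \<union> C \<union> H" "S \<inter> C = {}" "S \<inter> H = {}" "C \<inter> H = {}"
    and C_H_adj: "\<And>x h. x \<in> C \<Longrightarrow> h \<in> H \<Longrightarrow> E x h"
    and S_H_nonadj: "\<And>x h. x \<in> S \<Longrightarrow> h \<in> H \<Longrightarrow> \<not> E x h"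
begin

abbreviation n_outside_H :: "'a list \<Rightarrow> nat" where
  "n_outside_H D \<equiv> length (filter (\<lambda>x. x \<notin> H) D)"

lemma finite_V: "finite V"
  using simple by (simp add: simple_graph_def)

lemma finite_S: "finite S"
  using finite_V partition(1) by (auto intro: finite_subset)

lemma adj_sym: "E x y \<Longrightarrow> E y x"
  using simple by (simp add: simple_graph_def)

lemma adj_in_V: "E x y \<Longrightarrow> x \<in> V \<and> y \<in> V"
  using simple by (simp add: simple_graph_def)

lemma H_subset: "H \<subseteq> V"
  using partition(1) by blast

lemma H_attached: "h \<in> H \<Longrightarrow> h' \<in> H \<Longrightarrow> u \<notin> H \<Longrightarrow> E h u \<Longrightarrow> E u h'"
  using partition(1) adj_in_V[of h u] S_H_nonadj[of u h] C_H_adj[of u h'] adj_sym by blast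

lemma C_H_cnbr: "x \<in> C \<Longrightarrow> h \<in> H \<Longrightarrow> x \<in> cnbr V E h"
  using C_H_adj adj_sym partition(1) by (auto simp: mem_cnbr_iff)

lemma n_outside_H_le_if_few_C:
  assumes D: "is_dns V E D" and few: "card (set D \<inter> C) \<le> 1"
  shows "n_outside_H D \<le> card S + 1"
proof -
  have "n_outside_H D = card (set D - H)"
    using D distinct_card[of "filter (\<lambda>x. x \<notin> H) D"] by (simp add: is_dns_def set_diff_eq)
  also have "\<dots> \<le> card (S \<union> (set D \<inter> C))"
    using D partition(1) finite_S by (intro card_mono) (auto simp: is_dns_def)
  also have "\<dots> \<le> card S + card (set D \<inter> C)"
    by (rule card_Un_le)
  finally show ?thesis using few by linarith
qed

definition small_outside_H :: "'a list \<Rightarrow> bool" where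
  "small_outside_H D \<longleftrightarrow> n_outside_H D \<le> card S + 2
     \<or> n_outside_H D \<le> card S + 3 \<and> (\<exists>h\<in>H. set D \<inter> H \<inter> cnbr V E h = {})"

lemma length_le_if_small_outside_H:
  assumes D: "is_dns V E D" and small: "small_outside_H D"
  shows "length D \<le> gamma_dns H (induced E H) + card S + 2"
proof -
  have "length D = length (filter (\<lambda>x. x \<in> H) D) + n_outside_H D"
    using sum_length_filter_compl[of "\<lambda>x. x \<in> H" D] by simp
  moreover have "length (filter (\<lambda>x. x \<in> H) D) \<le> gamma_dns H (induced E H)"
    using length_le_gamma_dns[OF simple_graph_induced[OF simple H_subset]]
      is_dns_filter_induced[OF simple H_subset D H_attached] .
  moreover have "length (filter (\<lambda>x. x \<in> H) D) < gamma_dns H (induced E H)"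
    if "h \<in> H" "set D \<inter> H \<inter> cnbr V E h = {}" for h
    using length_filter_induced_lt_gamma_dns[OF simple H_subset D H_attached that] .
  ultimately show ?thesis using small unfolding small_outside_H_def by fastforce
qed

end

locale anchored_dns = spider_shape +
  fixes D ys :: "'a list" and q1 q2 :: 'a and zs :: "'a list"
  assumes dns: "is_dns V E D"
    and split: "D = ys @ q2 # zs"
    and first_in_C: "set ys \<inter> C = {q1}"
    and second_in_C: "q2 \<in> C"
    and q1_ne_q2: "q1 \<noteq> q2"
begin

abbreviation p :: nat where "p \<equiv> Suc (length ys)"

abbreviation P :: "'a set" where "P \<equiv> insert q2 (set ys)"

lemma set_take_p: "set (take p D) = P"
  using split by simp

lemma distinct_D: "distinct D"
  using dns by (simp add: is_dns_def)

lemma P_subset_V: "P \<subseteq> V"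
  using dns split by (auto simp: is_dns_def)

lemma q1_in: "q1 \<in> set ys" "q1 \<in> C"
  using first_in_C by auto

lemma P_inter_C: "P \<inter> C = {q1, q2}"
  using first_in_C second_in_C by auto

lemma later_notin_P:
  assumes "p \<le> i" "i < length D"
  shows "D ! i \<notin> P"
proof -
  have "D ! i \<in> set (drop p D)"
    using assms nth_drop[of p D "i - p"] nth_mem[of "i - p" "drop p D"] by simp
  then show ?thesis
    using set_take_disj_set_drop_if_distinct[OF distinct_D, of p p] set_take_p by auto
qed

(* A saturated vertex witnesses no position after P. *)
definition saturated :: "'a \<Rightarrow> bool" where
  "saturated u \<longleftrightarrow> 2 \<le> card (P \<inter> cnbr V E u)"

lemma saturatedI:
  "x \<in> P \<Longrightarrow> y \<in> P \<Longrightarrow> x \<noteq> y \<Longrightarrow> x \<in> cnbr V E u \<Longrightarrow> y \<in> cnbr V E u \<Longrightarrow> saturated u"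
  unfolding saturated_def using card_mono[of "P \<inter> cnbr V E u" "{x, y}"] by auto

lemma H_saturated: "h \<in> H \<Longrightarrow> saturated h"
  using saturatedI[of q1 q2] q1_in second_in_C q1_ne_q2 C_H_cnbr by blast

lemma later_witness_unsaturated:
  assumes "p \<le> i" "i < length D"
  obtains u where "u \<in> V" "dns_witness V E D i u" "\<not> saturated u"
proof -
  obtain u where u: "u \<in> V" "dns_witness V E D i u"
    using dns assms(2) is_dns_iff_witness[OF simple] by blast
  have "P \<inter> cnbr V E u \<subseteq> set (take i D) \<inter> cnbr V E u"
    using set_take_subset_set_take[OF assms(1), of D] set_take_p by blast
  then have "\<not> saturated u"
    using u(2) card_mono[of "set (take i D) \<inter> cnbr V E u" "P \<inter> cnbr V E u"]
    by (auto simp: saturated_def dns_witness_def)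
  with u that show ?thesis by blast
qed

definition witnessed_later :: "'a set \<Rightarrow> nat set" where
  "witnessed_later W = {i. p \<le> i \<and> i < length D \<and> (\<exists>u\<in>W. dns_witness V E D i u)}"

lemma finite_witnessed_later: "finite (witnessed_later W)"
  by (rule finite_subset[of _ "{..<length D}"]) (auto simp: witnessed_later_def)

lemma card_witnessed_later_le:
  assumes uniform: "\<And>y u u'. y \<notin> P \<Longrightarrow> u \<in> W \<Longrightarrow> u' \<in> W \<Longrightarrow> y \<in> cnbr V E u \<Longrightarrow> y \<in> cnbr V E u'"
    and covered: "\<And>u. u \<in> W \<Longrightarrow> k \<le> card (P \<inter> cnbr V E u)"
  shows "card (witnessed_later W) \<le> 2 - k"
  unfolding witnessed_later_def
proof (rule card_witnessed_after_le[OF dns])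
  show "p \<le> length D" using split by simp
  show "D ! i \<in> cnbr V E u'"
    if "p \<le> i" "i < length D" "u \<in> W" "u' \<in> W" "D ! i \<in> cnbr V E u" for i u u'
    using that uniform later_notin_P by blast
  show "k \<le> card (set (take p D) \<inter> cnbr V E u)" if "u \<in> W" for u
    using that covered set_take_p by simp
qed

lemma n_outside_H_eq:
  "n_outside_H D = card (P - H) + card {i. p \<le> i \<and> i < length D \<and> D ! i \<notin> H}"
proof -
  let ?L = "{i. i < p \<and> D ! i \<notin> H}"
  let ?R = "{i. p \<le> i \<and> i < length D \<and> D ! i \<notin> H}"
  have p_le: "p \<le> length D" using split by simp
  have "n_outside_H D = card {i. i < length D \<and> D ! i \<notin> H}"
    by (rule length_filter_conv_card)
  also have "{i. i < length D \<and> D ! i \<notin> H} = ?L \<union> ?R"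
    using p_le by auto
  also have "card (?L \<union> ?R) = card ?L + card ?R"
    by (rule card_Un_disjoint) auto
  also have "?L = {i. i < length (take p D) \<and> take p D ! i \<notin> H}"
    using p_le by auto
  also have "card \<dots> = n_outside_H (take p D)"
    by (simp add: length_filter_conv_card)
  also have "\<dots> = card (P - H)"
    using distinct_card[of "filter (\<lambda>x. x \<notin> H) (take p D)"] distinct_D set_take_p
    by (simp add: set_diff_eq)
  finally show ?thesis .
qed

lemma card_P_minus_H: "card (P - H) = card (P \<inter> S) + 2"
proof -
  have "P - H = (P \<inter> S) \<union> {q1, q2}" "(P \<inter> S) \<inter> {q1, q2} = {}"
    using P_subset_V partition P_inter_C by auto
  then show ?thesis using q1_ne_q2 by (simp add: card_Un_disjoint)
qed

(* A vertex x of S is counted in P - H iff x \<in> P, and it can still witness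
   2 - |P \<inter> N[x]| later positions. *)
definition budget :: "'a \<Rightarrow> nat" where
  "budget x = (if x \<in> P then 1 else 0) + (2 - card (P \<inter> cnbr V E x))"

lemma n_outside_H_le_budget:
  assumes unsaturated: "\<And>u. u \<in> V \<Longrightarrow> \<not> saturated u \<Longrightarrow> u \<in> S \<union> U"
    and uniform: "\<And>y u u'. y \<notin> P \<Longrightarrow> u \<in> U \<Longrightarrow> u' \<in> U \<Longrightarrow> y \<in> cnbr V E u \<Longrightarrow> y \<in> cnbr V E u'"
    and covered: "\<And>u. u \<in> U \<Longrightarrow> k \<le> card (P \<inter> cnbr V E u)"
  shows "n_outside_H D \<le> 2 + (\<Sum>x\<in>S. budget x) + (2 - k)"
proof -
  let ?R = "{i. p \<le> i \<and> i < length D \<and> D ! i \<notin> H}"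
  have "?R \<subseteq> witnessed_later U \<union> (\<Union>x\<in>S. witnessed_later {x})"
  proof
    fix i assume i: "i \<in> ?R"
    then obtain u where "u \<in> V" "dns_witness V E D i u" "\<not> saturated u"
      using later_witness_unsaturated by blast
    then show "i \<in> witnessed_later U \<union> (\<Union>x\<in>S. witnessed_later {x})"
      using i unsaturated by (auto simp: witnessed_later_def)
  qed
  then have "card ?R \<le> card (witnessed_later U \<union> (\<Union>x\<in>S. witnessed_later {x}))"
    by (intro card_mono) (simp_all add: finite_witnessed_later finite_S)
  also have "\<dots> \<le> card (witnessed_later U) + (\<Sum>x\<in>S. card (witnessed_later {x}))"
    using order_trans[OF card_Un_le add_left_mono[OF card_UN_le[OF finite_S]]] .
  also have "\<dots> \<le> (2 - k) + (\<Sum>x\<in>S. 2 - card (P \<inter> cnbr V E x))"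
  proof (intro add_mono sum_mono)
    show "card (witnessed_later U) \<le> 2 - k" by (rule card_witnessed_later_le[OF uniform covered])
    show "card (witnessed_later {x}) \<le> 2 - card (P \<inter> cnbr V E x)" for x
      by (rule card_witnessed_later_le) auto
  qed
  finally have "card ?R \<le> (2 - k) + (\<Sum>x\<in>S. 2 - card (P \<inter> cnbr V E x))" .
  moreover have "card (P \<inter> S) = (\<Sum>x\<in>S. if x \<in> P then 1 else 0)"
    using sum.inter_restrict[OF finite_S, of "\<lambda>_. 1::nat" P] by (simp add: Int_commute)
  ultimately show ?thesis
    using n_outside_H_eq card_P_minus_H by (simp add: budget_def sum.distrib)
qed

lemma budget_le_2:
  assumes "x \<in> S"
  shows "budget x \<le> 2"
proof -
  have "x \<in> P \<Longrightarrow> x \<in> P \<inter> cnbr V E x" using assms partition(1) by (auto simp: mem_cnbr_iff)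
  then show ?thesis using card_mono[of "P \<inter> cnbr V E x" "{x}"] by (auto simp: budget_def)
qed

lemma budget_le_1:
  assumes x: "x \<in> S" and q: "q \<in> P" "q \<in> C" "E x q"
  shows "budget x \<le> 1"
proof -
  have "q \<in> P \<inter> cnbr V E x" using q adj_in_V by (auto simp: mem_cnbr_iff)
  moreover have "x \<in> P \<Longrightarrow> x \<in> P \<inter> cnbr V E x" using x partition(1) by (auto simp: mem_cnbr_iff)
  moreover have "x \<noteq> q" using x q partition(2) by auto
  ultimately show ?thesis
    using card_mono[of "P \<inter> cnbr V E x" "{x, q}"] card_mono[of "P \<inter> cnbr V E x" "{q}"]
    by (auto simp: budget_def)
qed

lemma n_outside_H_le_if_C_saturated:
  assumes "\<And>u. u \<in> C \<Longrightarrow> saturated u" and "\<And>x. x \<in> S \<Longrightarrow> E x q1 \<or> E x q2"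
  shows "n_outside_H D \<le> card S + 2"
proof -
  have "n_outside_H D \<le> 2 + (\<Sum>x\<in>S. budget x) + (2 - 2)"
    by (rule n_outside_H_le_budget[where U = "{}"])
      (use assms(1) H_saturated partition(1) in auto)
  also have "(\<Sum>x\<in>S. budget x) \<le> (\<Sum>x\<in>S. 1)"
    using assms(2) budget_le_1 q1_in second_in_C by (intro sum_mono) blast
  finally show ?thesis by simp
qed

lemma n_outside_H_le_if_C_clique:
  assumes "\<And>x y. x \<in> C \<Longrightarrow> y \<in> C \<Longrightarrow> x \<noteq> y \<Longrightarrow> E x y"
    and "\<And>z x y. z \<in> S \<Longrightarrow> x \<in> C \<Longrightarrow> y \<in> C \<Longrightarrow> x \<noteq> y \<Longrightarrow> E z x \<or> E z y"
  shows "n_outside_H D \<le> card S + 2"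
proof (rule n_outside_H_le_if_C_saturated)
  fix u assume u: "u \<in> C"
  have "x \<in> cnbr V E u" if "x \<in> C" for x
    using that u assms(1) partition(1) by (cases "x = u") (auto simp: mem_cnbr_iff)
  then show "saturated u"
    using saturatedI[of q1 q2 u] q1_in second_in_C q1_ne_q2 by simp
next
  show "E x q1 \<or> E x q2" if "x \<in> S" for x
    using that assms(2) q1_in second_in_C q1_ne_q2 by blast
qed

lemma witness_of_second:
  obtains u where "u \<in> V" "q2 \<in> cnbr V E u" "card (set ys \<inter> cnbr V E u) \<le> 1"
proof -
  have "length ys < length D" using split by simp
  then obtain u where "u \<in> V" "dns_witness V E D (length ys) u"
    using dns unfolding is_dns_iff_witness[OF simple] by blast
  then show ?thesis using that split by (simp add: dns_witness_def)
qed

end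

context spider_shape
begin

lemma small_outside_H_if_anchored:
  assumes D: "is_dns V E D"
    and anchored: "\<And>ys q1 q2 zs. anchored_dns V E S C H D ys q1 q2 zs \<Longrightarrow> small_outside_H D"
  shows "small_outside_H D"
proof (cases "card (set D \<inter> C) \<le> 1")
  case True
  then show ?thesis using n_outside_H_le_if_few_C[OF D] by (simp add: small_outside_H_def)
next
  case False
  then have "2 \<le> card (set D \<inter> C)" by simp
  then obtain ys q1 q2 zs where "D = ys @ q2 # zs" "set ys \<inter> C = {q1}" "q2 \<in> C" "q1 \<noteq> q2"
    by (rule split_at_second_member)
  then show ?thesis
    using anchored D by (simp add: anchored_dns_def anchored_dns_axioms_def spider_shape_axioms)
qed

lemma length_le_if_C_clique:
  assumes "\<And>x y. x \<in> C \<Longrightarrow> y \<in> C \<Longrightarrow> x \<noteq> y \<Longrightarrow> E x y"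
    and "\<And>z x y. z \<in> S \<Longrightarrow> x \<in> C \<Longrightarrow> y \<in> C \<Longrightarrow> x \<noteq> y \<Longrightarrow> E z x \<or> E z y"
    and D: "is_dns V E D"
  shows "length D \<le> gamma_dns H (induced E H) + card S + 2"
proof (rule length_le_if_small_outside_H[OF D small_outside_H_if_anchored[OF D]])
  fix ys q1 q2 zs assume "anchored_dns V E S C H D ys q1 q2 zs"
  then interpret anchored_dns V E S C H D ys q1 q2 zs .
  show "small_outside_H D"
    using n_outside_H_le_if_C_clique assms(1,2) by (simp add: small_outside_H_def)
qed

end

(* In the application a, b are c_r and its twin, and s0 is s_r. *)
locale c_twin_shape = spider_shape +
  fixes a b s0 :: 'a
  assumes twins_in_C: "a \<in> C" "b \<in> C" "a \<noteq> b"
    and C_adj: "\<And>x y. x \<in> C \<Longrightarrow> y \<in> C \<Longrightarrow> x \<noteq> y \<Longrightarrow> {x, y} \<noteq> {a, b} \<Longrightarrow> E x y"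
    and twins: "\<And>y. y \<noteq> a \<Longrightarrow> y \<noteq> b \<Longrightarrow> E a y \<longleftrightarrow> E b y"
    and s0: "s0 \<in> S" "\<not> E s0 a" "\<not> E s0 b" "\<And>x. x \<in> C - {a, b} \<Longrightarrow> E s0 x"
    and S_adj_twins: "\<And>z. z \<in> S - {s0} \<Longrightarrow> E z a \<and> E z b"
    and S_misses_one: "\<And>z x y. z \<in> S - {s0} \<Longrightarrow> x \<in> C \<Longrightarrow> y \<in> C \<Longrightarrow> x \<noteq> y \<Longrightarrow> E z x \<or> E z y"
    and C_missed_once:
      "\<And>x z z'. x \<in> C - {a, b} \<Longrightarrow> z \<in> S - {s0} \<Longrightarrow> z' \<in> S - {s0} \<Longrightarrow> z \<noteq> z' \<Longrightarrow> E z x \<or> E z' x"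
    and three_le_card_S: "3 \<le> card S"
begin

lemma C_cnbr: "x \<in> C \<Longrightarrow> y \<in> C \<Longrightarrow> x = y \<or> {x, y} \<noteq> {a, b} \<Longrightarrow> x \<in> cnbr V E y"
  using C_adj[of y x] partition(1) by (auto simp: mem_cnbr_iff insert_commute)

lemma card_S_minus_s0: "card (S - {s0}) + 1 = card S"
  using s0(1) finite_S card_Diff_singleton[OF s0(1)] three_le_card_S by simp

end

locale c_twin_anchored = c_twin_shape + anchored_dns
begin

lemma n_outside_H_le_no_twin:
  assumes "q1 \<notin> {a, b}" "q2 \<notin> {a, b}"
  shows "n_outside_H D \<le> card S + 2"
proof (rule n_outside_H_le_if_C_saturated)
  show "saturated u" if "u \<in> C" for u
    using that assms C_cnbr[of q1 u] C_cnbr[of q2 u] q1_in second_in_C q1_ne_q2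
    by (intro saturatedI[of q1 q2]) auto
  show "E x q1 \<or> E x q2" if "x \<in> S" for x
    using that assms s0(4) S_misses_one q1_in second_in_C q1_ne_q2 by (cases "x = s0") auto
qed

lemma saturated_unless_other_twin:
  assumes x: "{x, x'} = {a, b}" and c: "c \<in> C - {a, b}" and q: "{q1, q2} = {x, c}"
    and u: "u \<in> C" "u \<noteq> x'"
  shows "saturated u"
proof (rule saturatedI)
  show "x \<in> P" "c \<in> P" using q P_inter_C by auto
  show "x \<noteq> c" using x c by auto
  show "x \<in> cnbr V E u"
    using u C_cnbr[of x u] x twins_in_C by (auto simp: doubleton_eq_iff)
  show "c \<in> cnbr V E u"
    using u C_cnbr[of c u] c by auto
qed

lemma sum_budget_le_if_other_twin_unsaturated:
  assumes x: "{x, x'} = {a, b}" and c: "c \<in> C - {a, b}" and q: "{q1, q2} = {x, c}"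
    and only_c: "P \<inter> cnbr V E x' = {c}"
  shows "(\<Sum>z\<in>S. budget z) \<le> 2"
proof -
  have in_P: "x \<in> P" "c \<in> P" and "x \<noteq> c" using q P_inter_C x c by auto
  have budget_le: "budget z \<le> (if \<not> E z c then 1 else 0)" if z: "z \<in> S - {s0}" for z
  proof -
    have "E z x" "E z x'" using S_adj_twins[OF z] x by (auto simp: doubleton_eq_iff)
    have "z \<in> cnbr V E x'" "z \<noteq> c"
      using \<open>E z x'\<close> adj_in_V adj_sym z c partition(2) by (auto simp: mem_cnbr_iff)
    then have "z \<notin> P" using only_c by blast
    moreover have "x \<in> P \<inter> cnbr V E z"
      using \<open>E z x\<close> in_P adj_in_V by (auto simp: mem_cnbr_iff)
    moreover have "E z c \<Longrightarrow> c \<in> P \<inter> cnbr V E z"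
      using in_P adj_in_V by (auto simp: mem_cnbr_iff)
    ultimately show ?thesis
      using \<open>x \<noteq> c\<close> card_mono[of "P \<inter> cnbr V E z" "{x, c}"] card_mono[of "P \<inter> cnbr V E z" "{x}"]
      by (auto simp: budget_def)
  qed
  have "(\<Sum>z\<in>S - {s0}. budget z) \<le> (\<Sum>z\<in>S - {s0}. if \<not> E z c then 1 else 0)"
    by (rule sum_mono) (rule budget_le)
  also have "\<dots> = card {z \<in> S - {s0}. \<not> E z c}"
    using sum.inter_filter[of "S - {s0}" "\<lambda>_. 1::nat" "\<lambda>z. \<not> E z c"] finite_S by simp
  also have "\<dots> \<le> 1"
    using C_missed_once[OF c] finite_S card_le_Suc0_iff_eq[of "{z \<in> S - {s0}. \<not> E z c}"]
    by auto
  finally have "(\<Sum>z\<in>S - {s0}. budget z) \<le> 1" .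
  moreover have "budget s0 \<le> 1"
    using budget_le_1[OF s0(1) in_P(2)] s0(4) c by blast
  ultimately show ?thesis
    using sum.remove[OF finite_S s0(1), of budget] by simp
qed

lemma n_outside_H_le_one_twin:
  assumes x: "{x, x'} = {a, b}" and c: "c \<in> C - {a, b}" and q: "{q1, q2} = {x, c}"
  shows "n_outside_H D \<le> card S + 2"
proof (cases "saturated x'")
  case True
  have "E z x \<or> E z c" if "z \<in> S" for z
    using that s0(4)[OF c] S_adj_twins x by (cases "z = s0") (auto simp: doubleton_eq_iff)
  then show ?thesis
    using True saturated_unless_other_twin[OF x c q] q
    by (intro n_outside_H_le_if_C_saturated) (auto simp: doubleton_eq_iff)
next
  case False
  have "x' \<in> C" "c \<in> P" using x c q twins_in_C P_inter_C by auto
  then have "c \<in> P \<inter> cnbr V E x'" using C_cnbr[of c x'] c by auto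
  then have only_c: "P \<inter> cnbr V E x' = {c}"
    using False card_le_Suc0_iff_eq[of "P \<inter> cnbr V E x'"] by (auto simp: saturated_def)
  have "n_outside_H D \<le> 2 + (\<Sum>z\<in>S. budget z) + (2 - 1)"
  proof (rule n_outside_H_le_budget[where U = "{x'}"])
    show "u \<in> S \<union> {x'}" if "u \<in> V" "\<not> saturated u" for u
      using that saturated_unless_other_twin[OF x c q] H_saturated partition(1) by blast
  qed (use only_c in auto)
  then show ?thesis
    using sum_budget_le_if_other_twin_unsaturated[OF x c q only_c] three_le_card_S by linarith
qed

lemma unsaturated_in_S_or_twins:
  assumes q: "{q1, q2} = {a, b}" and u: "u \<in> V" "\<not> saturated u"
  shows "u \<in> S \<union> {a, b}"
proof (rule ccontr)
  assume "u \<notin> S \<union> {a, b}"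
  then have "u \<in> C - {a, b}" using u H_saturated partition(1) by blast
  then have "a \<in> cnbr V E u" "b \<in> cnbr V E u"
    using C_cnbr[of a u] C_cnbr[of b u] twins_in_C by (auto simp: doubleton_eq_iff)
  then show False
    using u(2) saturatedI[of a b u] q P_inter_C twins_in_C(3) by blast
qed

lemma twins_saturated:
  assumes q: "{q1, q2} = {a, b}" and z: "z \<in> P" "z \<in> S - {s0}" and t: "t \<in> {a, b}"
  shows "saturated t"
proof (rule saturatedI)
  show "z \<in> P" "t \<in> P" using z t q P_inter_C by auto
  show "z \<noteq> t" using z t twins_in_C partition(2) by auto
  show "z \<in> cnbr V E t" "t \<in> cnbr V E t"
    using S_adj_twins[OF z(2)] t adj_in_V adj_sym by (auto simp: mem_cnbr_iff)
qed

lemma witness_of_second_in_H: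
  assumes q: "{q1, q2} = {a, b}" and S_P: "S - {s0} \<subseteq> P"
    and u: "u \<in> V" "q2 \<in> cnbr V E u" "card (set ys \<inter> cnbr V E u) \<le> 1"
  shows "u \<in> H"
proof -
  have single: "x = y" if "x \<in> set ys" "y \<in> set ys" "x \<in> cnbr V E u" "y \<in> cnbr V E u" for x y
    using that u(3) card_le_Suc0_iff_eq[of "set ys \<inter> cnbr V E u"] by auto
  have S_ys: "S - {s0} \<subseteq> set ys" using S_P second_in_C partition(2) by auto
  have q12: "q1 \<in> {a, b}" "q2 \<in> {a, b}" using q by auto
  have "\<not> card (S - {s0}) \<le> 1" using card_S_minus_s0 three_le_card_S by simp
  then obtain z1 z2 where z: "z1 \<in> S - {s0}" "z2 \<in> S - {s0}" "z1 \<noteq> z2"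
    using finite_S card_le_Suc0_iff_eq[of "S - {s0}"] by auto
  have z_cnbr: "z \<in> cnbr V E t" if "z \<in> S - {s0}" "t \<in> {a, b}" for z t
    using S_adj_twins[OF that(1)] that adj_in_V adj_sym by (auto simp: mem_cnbr_iff)
  have "u \<notin> S"
  proof
    assume "u \<in> S"
    moreover have "u \<noteq> s0"
      using u(2) q12(2) s0 second_in_C partition(2) by (auto simp: mem_cnbr_iff)
    ultimately have "u \<in> set ys" "u \<in> cnbr V E u" "q1 \<in> cnbr V E u" "u \<noteq> q1"
      using S_ys u(1) S_adj_twins[of u] q12(1) q1_in partition(2) adj_in_V by (auto simp: mem_cnbr_iff)
    then show False using single q1_in(1) by blast
  qed
  moreover have "u \<notin> C"
  proof
    assume uC: "u \<in> C"
    show False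
    proof (cases "u \<in> {a, b}")
      case True
      then show False using single[of z1 z2] z S_ys z_cnbr by blast
    next
      case False
      then obtain z' where "z' \<in> S - {s0}" "E z' u" using C_missed_once[of u z1 z2] z uC by blast
      then have "z' \<in> set ys" "z' \<in> cnbr V E u" "q1 \<in> cnbr V E u" "z' \<noteq> q1"
        using S_ys adj_sym adj_in_V C_cnbr[of q1 u] uC q1_in False partition(2)
        by (auto simp: mem_cnbr_iff doubleton_eq_iff)
      then show False using single q1_in(1) by blast
    qed
  qed
  ultimately show "u \<in> H" using u(1) partition(1) by blast
qed

lemma H_part_avoids_witness_of_second:
  assumes q: "{q1, q2} = {a, b}" and z: "z \<in> P" "z \<in> S - {s0}"
    and u: "u \<in> H" "card (set ys \<inter> cnbr V E u) \<le> 1"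
    and y: "y \<in> set D" "y \<in> H"
  shows "y \<notin> cnbr V E u"
proof
  assume yu: "y \<in> cnbr V E u"
  obtain i where i: "i < length D" "D ! i = y" using y(1) by (auto simp: in_set_conv_nth)
  show False
  proof (cases "i < p")
    case True
    then have "y \<in> P" using i set_take_p by (metis in_set_conv_nth length_take min_less_iff_conj nth_take)
    then have "y \<in> set ys" "y \<noteq> q1" using y(2) second_in_C q1_in partition(4) by auto
    moreover have "q1 \<in> cnbr V E u" using C_H_cnbr[OF q1_in(2) u(1)] .
    ultimately show False
      using yu q1_in(1) u(2) card_le_Suc0_iff_eq[of "set ys \<inter> cnbr V E u"] by auto
  next
    case False
    then have "p \<le> i" by simp
    then obtain u' where u': "u' \<in> V" "dns_witness V E D i u'" "\<not> saturated u'"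
      using i(1) by (rule later_witness_unsaturated)
    have "y \<in> cnbr V E u'" using u'(2) i(2) by (simp add: dns_witness_def)
    then have "u' \<notin> S" using y(2) S_H_nonadj partition(3) by (auto simp: mem_cnbr_iff)
    moreover have "u' \<notin> {a, b}" using twins_saturated[OF q z] u'(3) by blast
    ultimately show False using unsaturated_in_S_or_twins[OF q u'(1,3)] by blast
  qed
qed

lemma untouched_H_if_S_in_P:
  assumes q: "{q1, q2} = {a, b}" and S_P: "S - {s0} \<subseteq> P"
  shows "\<exists>h\<in>H. set D \<inter> H \<inter> cnbr V E h = {}"
proof -
  obtain u where u: "u \<in> V" "q2 \<in> cnbr V E u" "card (set ys \<inter> cnbr V E u) \<le> 1"
    by (rule witness_of_second)
  have "card (S - {s0}) \<noteq> 0" using card_S_minus_s0 three_le_card_S by linarith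
  then obtain z where z: "z \<in> S - {s0}" by (metis card.empty ex_in_conv)
  have "u \<in> H" by (rule witness_of_second_in_H[OF q S_P u])
  then show ?thesis
    using H_part_avoids_witness_of_second[OF q _ z _ u(3)] z S_P by blast
qed

lemma sum_budget_le_if_twins_in_P:
  assumes "a \<in> P" "b \<in> P"
  shows "(\<Sum>z\<in>S. budget z) \<le> 2 + card (P \<inter> (S - {s0}))"
proof -
  have "budget z = (if z \<in> P then 1 else 0)" if z: "z \<in> S - {s0}" for z
  proof -
    have "a \<in> P \<inter> cnbr V E z" "b \<in> P \<inter> cnbr V E z"
      using S_adj_twins[OF z] assms adj_in_V by (auto simp: mem_cnbr_iff)
    then show ?thesis
      using twins_in_C(3) card_mono[of "P \<inter> cnbr V E z" "{a, b}"] by (auto simp: budget_def)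
  qed
  then have "(\<Sum>z\<in>S - {s0}. budget z) = card (P \<inter> (S - {s0}))"
    using sum.inter_restrict[of "S - {s0}" "\<lambda>_. 1::nat" P] finite_S by (simp add: Int_commute)
  then show ?thesis
    using sum.remove[OF finite_S s0(1), of budget] budget_le_2[OF s0(1)] by simp
qed

lemma small_outside_H_both_twins:
  assumes q: "{q1, q2} = {a, b}"
  shows "small_outside_H D"
proof -
  have ab_P: "a \<in> P" "b \<in> P" using q P_inter_C by auto
  define m where "m = card (P \<inter> (S - {s0}))"
  define k where "k = min (card (P \<inter> cnbr V E a)) (card (P \<inter> cnbr V E b))"
  have "n_outside_H D \<le> 2 + (\<Sum>z\<in>S. budget z) + (2 - k)"
  proof (rule n_outside_H_le_budget[where U = "{a, b}"])
    show "u \<in> S \<union> {a, b}" if "u \<in> V" "\<not> saturated u" for u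
      using unsaturated_in_S_or_twins[OF q that] .
    show "y \<in> cnbr V E u'" if "y \<notin> P" "u \<in> {a, b}" "u' \<in> {a, b}" "y \<in> cnbr V E u" for y u u'
      using that ab_P twins[of y] by (auto simp: mem_cnbr_iff)
  qed (auto simp: k_def)
  moreover have "2 - k \<le> 1"
    using ab_P twins_in_C partition(1) card_mono[of "P \<inter> cnbr V E a" "{a}"]
      card_mono[of "P \<inter> cnbr V E b" "{b}"]
    by (auto simp: k_def mem_cnbr_iff)
  moreover have "2 - k = 0" if "1 \<le> m"
  proof -
    have "P \<inter> (S - {s0}) \<noteq> {}" using that unfolding m_def by (metis card.empty not_one_le_zero)
    then obtain z where "z \<in> P" "z \<in> S - {s0}" by blast
    then show ?thesis using twins_saturated[OF q] by (auto simp: k_def saturated_def)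
  qed
  moreover have "m \<le> card (S - {s0})"
    using finite_S by (auto simp: m_def intro: card_mono)
  moreover have "\<exists>h\<in>H. set D \<inter> H \<inter> cnbr V E h = {}" if "m = card (S - {s0})"
    using that finite_S card_subset_eq[of "S - {s0}" "P \<inter> (S - {s0})"]
    by (intro untouched_H_if_S_in_P[OF q]) (auto simp: m_def)
  ultimately show ?thesis
    using sum_budget_le_if_twins_in_P[OF ab_P] card_S_minus_s0 three_le_card_S
    unfolding small_outside_H_def m_def[symmetric]
    by (cases "m = 0"; cases "m = card (S - {s0})") auto
qed

lemma small_outside_H: "small_outside_H D"
proof -
  consider "q1 \<notin> {a, b}" "q2 \<notin> {a, b}" | "{q1, q2} = {a, b}"
    | x x' c where "{x, x'} = {a, b}" "c \<in> C - {a, b}" "{q1, q2} = {x, c}"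
    using q1_in(2) second_in_C q1_ne_q2 by (auto simp: doubleton_eq_iff)
  then show ?thesis
  proof cases
    case 1
    then show ?thesis using n_outside_H_le_no_twin by (simp add: small_outside_H_def)
  next
    case 2
    then show ?thesis by (rule small_outside_H_both_twins)
  next
    case 3
    then show ?thesis using n_outside_H_le_one_twin by (simp add: small_outside_H_def)
  qed
qed

end

lemma (in c_twin_shape) length_le:
  assumes D: "is_dns V E D"
  shows "length D \<le> gamma_dns H (induced E H) + card S + 2"
proof (rule length_le_if_small_outside_H[OF D small_outside_H_if_anchored[OF D]])
  fix ys q1 q2 zs assume "anchored_dns V E S C H D ys q1 q2 zs"
  then interpret c_twin_anchored V E S C H a b s0 D ys q1 q2 zs
    by (simp add: c_twin_anchored_def c_twin_shape_axioms)
  show "small_outside_H D" by (rule small_outside_H)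
qed

section \<open>Thick spiders and their twins\<close>

(* adjacent = True gives the true twin (S_t, C_t), adjacent = False the false twin (S_f, C_f). *)
definition twin_edges :: "bool \<Rightarrow> ('a \<Rightarrow> 'a \<Rightarrow> bool) \<Rightarrow> 'a \<Rightarrow> 'a \<Rightarrow> 'a \<Rightarrow> 'a \<Rightarrow> bool" where
  "twin_edges adjacent E v w = (if adjacent then true_twin_edges E v w else false_twin_edges E v w)"

lemma twin_edges_iff:
  "twin_edges adjacent E v w x y \<longleftrightarrow>
     E x y \<or> x = w \<and> E v y \<or> y = w \<and> E x v \<or> adjacent \<and> (x = w \<and> y = v \<or> x = v \<and> y = w)"
  by (auto simp: twin_edges_def true_twin_edges_def false_twin_edges_def)

context
  fixes V :: "'a set" and E :: "'a \<Rightarrow> 'a \<Rightarrow> bool" and v w :: 'a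
  assumes G: "simple_graph V E" and w: "w \<notin> V"
begin

lemma twin_edges_old [simp]:
  "x \<in> V \<Longrightarrow> y \<in> V \<Longrightarrow> twin_edges adjacent E v w x y \<longleftrightarrow> E x y"
  using w by (auto simp: twin_edges_iff)

lemma twin_edges_new [simp]:
  "y \<in> V \<Longrightarrow> twin_edges adjacent E v w w y \<longleftrightarrow> E v y \<or> adjacent \<and> y = v"
  "y \<in> V \<Longrightarrow> twin_edges adjacent E v w y w \<longleftrightarrow> E y v \<or> adjacent \<and> y = v"
  using w G by (auto simp: twin_edges_iff simple_graph_def)

lemma simple_graph_twin_edges:
  "v \<in> V \<Longrightarrow> simple_graph (insert w V) (twin_edges adjacent E v w)"
  using G w by (auto simp: simple_graph_def twin_edges_iff)

lemma induced_twin_edges: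
  assumes "H \<subseteq> V"
  shows "induced (twin_edges adjacent E v w) H = induced E H"
proof (intro ext)
  fix x y
  show "induced (twin_edges adjacent E v w) H x y = induced E H x y"
    using subsetD[OF assms] twin_edges_old[of x y] by (auto simp: induced_def)
qed

end

locale thick_spider_graph =
  fixes V :: "'a set" and E :: "'a \<Rightarrow> 'a \<Rightarrow> bool" and r :: nat and s c :: "nat \<Rightarrow> 'a"
    and H :: "'a set"
  assumes thick_spider: "thick_spider V E r s c H"
begin

abbreviation S :: "'a set" where "S \<equiv> s ` {1..r}"

abbreviation C :: "'a set" where "C \<equiv> c ` {1..r}"

lemma simple: "simple_graph V E"
  and V_eq: "V = S \<union> C \<union> H"
  and disjoint: "S \<inter> C = {}" "S \<inter> H = {}" "C \<inter> H = {}"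
  and inj: "inj_on s {1..r}" "inj_on c {1..r}"
  and S_indep: "\<forall>i\<in>{1..r}. \<forall>j\<in>{1..r}. \<not> E (s i) (s j)"
  and C_clique: "\<forall>i\<in>{1..r}. \<forall>j\<in>{1..r}. i \<noteq> j \<longrightarrow> E (c i) (c j)"
  and C_H: "\<forall>i\<in>{1..r}. \<forall>h\<in>H. E (c i) h"
  and S_H: "\<forall>i\<in>{1..r}. \<forall>h\<in>H. \<not> E (s i) h"
  and S_C: "\<forall>i\<in>{1..r}. \<forall>j\<in>{1..r}. E (s i) (c j) \<longleftrightarrow> i \<noteq> j"
  by (insert thick_spider[unfolded thick_spider_def]) (elim conjE, assumption)+

lemma card_S: "card S = r"
  using inj(1) by (simp add: card_image)

lemma in_V [simp]: "i \<in> {1..r} \<Longrightarrow> s i \<in> V" "i \<in> {1..r} \<Longrightarrow> c i \<in> V" "h \<in> H \<Longrightarrow> h \<in> V"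
  using V_eq by auto

lemma distinct_vertices [simp]:
  assumes "i \<in> {1..r}" "j \<in> {1..r}"
  shows "s i = s j \<longleftrightarrow> i = j" "c i = c j \<longleftrightarrow> i = j" "s i \<noteq> c j" "c j \<noteq> s i"
proof -
  have "s i \<in> S" "c j \<in> C" using assms by auto
  then show "s i \<noteq> c j" "c j \<noteq> s i" using disjoint(1) by (metis IntI empty_iff)+
  show "s i = s j \<longleftrightarrow> i = j" "c i = c j \<longleftrightarrow> i = j"
    using inj_on_eq_iff[OF inj(1) assms] inj_on_eq_iff[OF inj(2) assms] .
qed

lemma notin_H [simp]: "i \<in> {1..r} \<Longrightarrow> s i \<notin> H" "i \<in> {1..r} \<Longrightarrow> c i \<notin> H"
  using disjoint(2,3) by (metis IntI empty_iff imageI)+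

lemma adj_sym: "E x y \<Longrightarrow> E y x"
  using simple by (simp add: simple_graph_def)

lemma adj [simp]:
  assumes "i \<in> {1..r}" "j \<in> {1..r}"
  shows "\<not> E (s i) (s j)" "E (c i) (c j) \<longleftrightarrow> i \<noteq> j"
    "E (s i) (c j) \<longleftrightarrow> i \<noteq> j" "E (c j) (s i) \<longleftrightarrow> i \<noteq> j"
proof -
  show "\<not> E (s i) (s j)" using S_indep assms by blast
  show s_c: "E (s i) (c j) \<longleftrightarrow> i \<noteq> j" using S_C assms by blast
  then show "E (c j) (s i) \<longleftrightarrow> i \<noteq> j" using adj_sym by blast
  have "\<not> E (c i) (c i)" using simple by (simp add: simple_graph_def)
  then show "E (c i) (c j) \<longleftrightarrow> i \<noteq> j" using C_clique assms by blast
qed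

lemma adj_H [simp]:
  assumes "i \<in> {1..r}" "h \<in> H"
  shows "E (c i) h" "E h (c i)" "\<not> E (s i) h" "\<not> E h (s i)"
  using assms C_H S_H adj_sym by blast+

lemma spider_shape: "spider_shape V E S C H"
  by unfold_locales (use simple V_eq disjoint in auto)

lemma length_le:
  assumes "is_dns V E D"
  shows "length D \<le> gamma_dns H (induced E H) + r + 2"
proof -
  interpret G: spider_shape V E S C H by (rule spider_shape)
  have "length D \<le> gamma_dns H (induced E H) + card S + 2"
    by (rule G.length_le_if_C_clique[OF _ _ assms]) auto
  then show ?thesis unfolding card_S .
qed

lemma new_vertex:
  assumes "w \<notin> V"
  shows "w \<notin> S" "w \<notin> C" "w \<notin> H" "i \<in> {1..r} \<Longrightarrow> s i \<noteq> w" "i \<in> {1..r} \<Longrightarrow> c i \<noteq> w"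
  using assms V_eq by auto

lemma s_twin_spider_shape:
  assumes r: "1 \<le> r" and w: "w \<notin> V"
  shows "spider_shape (insert w V) (twin_edges adjacent E (s r) w) (insert w S) C H"
proof -
  note twin_simps [simp] = twin_edges_old[OF simple w] twin_edges_new[OF simple w]
  have r_in: "r \<in> {1..r}" using r by simp
  show ?thesis
  proof
    show "simple_graph (insert w V) (twin_edges adjacent E (s r) w)"
      using simple_graph_twin_edges[OF simple w] r_in by simp
    show "insert w V = insert w S \<union> C \<union> H" using V_eq by auto
    show "insert w S \<inter> C = {}" "insert w S \<inter> H = {}" "C \<inter> H = {}"
      using disjoint new_vertex[OF w] by auto
    show "twin_edges adjacent E (s r) w x h" if "x \<in> C" "h \<in> H" for x h
      using that by auto
    show "\<not> twin_edges adjacent E (s r) w x h" if "x \<in> insert w S" "h \<in> H" for x h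
      using that r_in new_vertex[OF w] by auto
  qed
qed

lemma length_le_s_twin:
  assumes r: "1 \<le> r" and w: "w \<notin> V" and D: "is_dns (insert w V) (twin_edges adjacent E (s r) w) D"
  shows "length D \<le> gamma_dns H (induced E H) + r + 3"
proof -
  note twin_simps [simp] = twin_edges_old[OF simple w] twin_edges_new[OF simple w]
  interpret G': spider_shape "insert w V" "twin_edges adjacent E (s r) w" "insert w S" C H
    by (rule s_twin_spider_shape[OF r w])
  have "length D \<le> gamma_dns H (induced (twin_edges adjacent E (s r) w) H) + card (insert w S) + 2"
    by (rule G'.length_le_if_C_clique[OF _ _ D]) (use r in auto)
  moreover have "card (insert w S) = r + 1" using card_S new_vertex[OF w] by simp
  ultimately show ?thesis using induced_twin_edges[OF simple w] V_eq by auto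
qed

lemma c_twin_spider_shape:
  assumes r: "1 \<le> r" and w: "w \<notin> V"
  shows "spider_shape (insert w V) (twin_edges adjacent E (c r) w) S (insert w C) H"
proof -
  note twin_simps [simp] = twin_edges_old[OF simple w] twin_edges_new[OF simple w]
  have r_in: "r \<in> {1..r}" using r by simp
  show ?thesis
  proof
    show "simple_graph (insert w V) (twin_edges adjacent E (c r) w)"
      using simple_graph_twin_edges[OF simple w] r_in by simp
    show "insert w V = S \<union> insert w C \<union> H" using V_eq by auto
    show "S \<inter> insert w C = {}" "S \<inter> H = {}" "insert w C \<inter> H = {}"
      using disjoint new_vertex[OF w] by auto
    show "twin_edges adjacent E (c r) w x h" if "x \<in> insert w C" "h \<in> H" for x h
      using that r_in new_vertex[OF w] by auto
    show "\<not> twin_edges adjacent E (c r) w x h" if "x \<in> S" "h \<in> H" for x h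
      using that by auto
  qed
qed

lemma c_twin_shape:
  assumes r: "3 \<le> r" and w: "w \<notin> V"
  shows "c_twin_shape (insert w V) (twin_edges adjacent E (c r) w) S (insert w C) H (c r) w (s r)"
proof (intro c_twin_shape.intro c_twin_shape_axioms.intro)
  note twin_simps [simp] = twin_edges_old[OF simple w] twin_edges_new[OF simple w]
  let ?E = "twin_edges adjacent E (c r) w"
  have r_in: "r \<in> {1..r}" using r by simp
  note w_new = new_vertex[OF w]
  show "spider_shape (insert w V) ?E S (insert w C) H"
    using c_twin_spider_shape[OF _ w] r by simp
  show "c r \<in> insert w C" "w \<in> insert w C" "c r \<noteq> w"
    using r_in w_new by auto
  show "?E x y" if "x \<in> insert w C" "y \<in> insert w C" "x \<noteq> y" "{x, y} \<noteq> {c r, w}" for x y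
    using that r_in w_new by (auto simp: doubleton_eq_iff)
  show "?E (c r) y \<longleftrightarrow> ?E w y" if "y \<noteq> c r" "y \<noteq> w" for y
    using that simple w by (auto simp: twin_edges_iff simple_graph_def)
  show "s r \<in> S" "\<not> ?E (s r) (c r)" "\<not> ?E (s r) w" using r_in w_new by auto
  show "?E (s r) x" if "x \<in> insert w C - {c r, w}" for x
    using that r_in by auto
  show "?E z (c r) \<and> ?E z w" if "z \<in> S - {s r}" for z
    using that r_in by auto
  show "?E z x \<or> ?E z y" if "z \<in> S - {s r}" "x \<in> insert w C" "y \<in> insert w C" "x \<noteq> y" for z x y
    using that r_in w_new by auto
  show "?E z x \<or> ?E z' x" if "x \<in> insert w C - {c r, w}" "z \<in> S - {s r}" "z' \<in> S - {s r}" "z \<noteq> z'"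
    for x z z'
    using that by auto
  show "3 \<le> card S" using card_S r by simp
qed

lemma length_le_c_twin:
  assumes r: "3 \<le> r" and w: "w \<notin> V" and D: "is_dns (insert w V) (twin_edges adjacent E (c r) w) D"
  shows "length D \<le> gamma_dns H (induced E H) + r + 2"
  using c_twin_shape.length_le[OF c_twin_shape[OF r w] D] card_S induced_twin_edges[OF simple w] V_eq
  by auto

definition legs :: "'a list" where
  "legs = map s [1..<r+1]"

lemma set_legs: "set legs = S" and distinct_legs: "distinct legs"
proof -
  have "set [1..<r+1] = {1..r}" by auto
  then show "set legs = S" "distinct legs"
    using inj(1) unfolding legs_def by (simp_all only: set_map distinct_map distinct_upt)
qed

context
  fixes V' :: "'a set" and E' :: "'a \<Rightarrow> 'a \<Rightarrow> bool" and T :: "'a list"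
  assumes G': "simple_graph V' E'" "V \<subseteq> V'"
    and agree: "\<And>x y. x \<in> V \<Longrightarrow> y \<in> V \<Longrightarrow> E' x y \<longleftrightarrow> E x y"
    and T: "is_dns H (induced E H) T"
begin

lemma set_T: "set T \<subseteq> H"
  using T by (simp add: is_dns_def)

lemma is_dns_T_legs: "is_dns V' E' (T @ legs)"
proof (rule is_dns_append_isolated[OF G'(1)])
  show "is_dns V' E' T"
    by (rule is_dns_induced_supergraph[OF simple_graph_induced[OF simple] G'(1) _ _ T])
      (use G' agree V_eq in \<open>auto simp: induced_def\<close>)
  show "distinct legs" by (rule distinct_legs)
  show "set legs \<subseteq> V'" "set legs \<inter> set T = {}"
    using G'(2) set_T set_legs V_eq disjoint(2) by auto
  show "\<not> E' y z" if "y \<in> set legs" "z \<in> set T \<union> set legs" for y z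
    using that set_T agree set_legs by auto
qed

lemma is_dns_T_legs_c1_c2:
  assumes r: "2 \<le> r" and ws: "is_dns V' E' (T @ legs @ ws)" "set ws \<inter> V = {}"
    and nonadj: "\<And>x. x \<in> set ws \<Longrightarrow> \<not> E' (s 1) x \<and> \<not> E' (s 2) x"
  shows "is_dns V' E' (T @ legs @ ws @ [c 1, c 2])"
proof -
  have in_r: "1 \<in> {1..r}" "2 \<in> {1..r}" using r by auto
  let ?xs = "T @ legs @ ws"
  have c_notin: "c 1 \<notin> set ?xs" "c 2 \<notin> set ?xs"
    using set_T ws(2) in_r set_legs by auto
  have in_V': "s 1 \<in> V'" "s 2 \<in> V'" "c 1 \<in> V'" "c 2 \<in> V'"
    using G'(2) in_r by auto
  have c_cnbr: "c 1 \<in> cnbr V' E' (s 2)" "c 2 \<in> cnbr V' E' (s 1)"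
    using in_V' agree in_r by (auto simp: mem_cnbr_iff)
  have "set ?xs \<inter> cnbr V' E' (s 2) \<subseteq> {s 2}"
    using set_T nonadj agree in_r set_legs by (auto simp: mem_cnbr_iff)
  then have xs_c1: "is_dns V' E' (?xs @ [c 1])"
    by (rule is_dns_snocI[OF G'(1) ws(1) c_notin(1) c_cnbr(1) in_V'(2)])
  have "set (?xs @ [c 1]) \<inter> cnbr V' E' (s 1) \<subseteq> {s 1}"
    using set_T nonadj agree in_r set_legs by (auto simp: mem_cnbr_iff)
  moreover have "c 2 \<notin> set (?xs @ [c 1])" using c_notin(2) in_r by simp
  ultimately have "is_dns V' E' ((?xs @ [c 1]) @ [c 2])"
    using is_dns_snocI[OF G'(1) xs_c1 _ c_cnbr(2) in_V'(1)] by blast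
  then show ?thesis by simp
qed

end

lemma length_legs: "length legs = r"
  by (simp add: legs_def)

lemma is_mdns_spider:
  assumes r: "2 \<le> r" and T: "is_mdns H (induced E H) T"
  shows "is_mdns V E (T @ legs @ [c 1, c 2])"
proof (rule is_mdnsI[OF simple])
  have T_dns: "is_dns H (induced E H) T" using T by (simp add: is_mdns_def)
  show "is_dns V E (T @ legs @ [c 1, c 2])"
    using is_dns_T_legs_c1_c2[OF simple order_refl _ T_dns r, of "[]"]
      is_dns_T_legs[OF simple order_refl _ T_dns] by simp
  show "length D \<le> length (T @ legs @ [c 1, c 2])" if "is_dns V E D" for D
    using length_le[OF that] T length_legs by (simp add: is_mdns_def)
qed

lemma is_mdns_c_twin:
  assumes r: "3 \<le> r" and w: "w \<notin> V" and T: "is_mdns H (induced E H) T"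
  shows "is_mdns (insert w V) (twin_edges adjacent E (c r) w) (T @ legs @ [c 1, c 2])"
proof (rule is_mdnsI)
  have T_dns: "is_dns H (induced E H) T" using T by (simp add: is_mdns_def)
  have G': "simple_graph (insert w V) (twin_edges adjacent E (c r) w)"
    using simple_graph_twin_edges[OF simple w] r by simp
  then show "simple_graph (insert w V) (twin_edges adjacent E (c r) w)" .
  note agree = twin_edges_old[OF simple w]
  show "is_dns (insert w V) (twin_edges adjacent E (c r) w) (T @ legs @ [c 1, c 2])"
    using is_dns_T_legs_c1_c2[OF G' _ agree T_dns _ _, of "[]"] is_dns_T_legs[OF G' _ agree T_dns] r
    by auto
  show "length D \<le> length (T @ legs @ [c 1, c 2])"
    if "is_dns (insert w V) (twin_edges adjacent E (c r) w) D" for D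
    using length_le_c_twin[OF r w that] T length_legs by (simp add: is_mdns_def)
qed

lemma is_mdns_s_twin:
  assumes r: "3 \<le> r" and w: "w \<notin> V" and T: "is_mdns H (induced E H) T"
  shows "is_mdns (insert w V) (twin_edges adjacent E (s r) w) (T @ legs @ [w, c 1, c 2])"
proof (rule is_mdnsI)
  let ?E = "twin_edges adjacent E (s r) w"
  note twin_simps [simp] = twin_edges_old[OF simple w] twin_edges_new[OF simple w]
  have in_r: "1 \<in> {1..r}" "2 \<in> {1..r}" "r \<in> {1..r}" "1 \<noteq> r" "2 \<noteq> r" using r by auto
  have T_dns: "is_dns H (induced E H) T" and set_T: "set T \<subseteq> H"
    using T by (simp_all add: is_mdns_def is_dns_def)
  have G': "simple_graph (insert w V) ?E"
    using simple_graph_twin_edges[OF simple w] in_r by simp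
  then show "simple_graph (insert w V) ?E" .
  note agree = twin_edges_old[OF simple w]
  have "y = s r" if "y \<in> set (T @ legs)" "y \<in> cnbr (insert w V) ?E w" for y
  proof -
    have "y \<in> H \<or> y \<in> S" using that(1) set_T set_legs by auto
    moreover from this have "y \<in> V" "y \<noteq> w" using V_eq new_vertex[OF w] by auto
    ultimately show ?thesis using that(2) in_r by (auto simp: mem_cnbr_iff)
  qed
  then have "set (T @ legs) \<inter> cnbr (insert w V) ?E w \<subseteq> {s r}" by blast
  moreover have "w \<notin> set (T @ legs)" using set_T set_legs new_vertex[OF w] by auto
  moreover have "w \<in> cnbr (insert w V) ?E w" by (simp add: mem_cnbr_iff)
  ultimately have "is_dns (insert w V) ?E ((T @ legs) @ [w])"
    using is_dns_snocI[OF G' is_dns_T_legs[OF G' _ agree T_dns]] by blast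
  then show "is_dns (insert w V) ?E (T @ legs @ [w, c 1, c 2])"
    using is_dns_T_legs_c1_c2[OF G' _ agree T_dns _ _, of "[w]"] r w in_r by auto
  show "length D \<le> length (T @ legs @ [w, c 1, c 2])" if "is_dns (insert w V) ?E D" for D
    using length_le_s_twin[OF _ w that] r T length_legs by (simp add: is_mdns_def)
qed

end

theorem proposition10:
  fixes V :: "'a set" and E :: "'a \<Rightarrow> 'a \<Rightarrow> bool" and r :: nat
    and s c :: "nat \<Rightarrow> 'a" and H :: "'a set" and T :: "'a list" and w :: 'a
  assumes spider: "thick_spider V E r s c H"
    and r3: "r \<ge> 3"
    and TH: "is_mdns H (induced E H) T"
    and w_new: "w \<notin> V"
  shows
   "gamma_dns (insert w V) (false_twin_edges E (s r) w)
      = gamma_dns (insert w V) (true_twin_edges E (s r) w)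
    \<and> gamma_dns (insert w V) (true_twin_edges E (s r) w) = gamma_dns V E + 1
    \<and> gamma_dns V E + 1 = r + 3 + gamma_dns H (induced E H)
    \<and> is_mdns (insert w V) (false_twin_edges E (s r) w) (T @ map s [1..<r+1] @ [w, c 1, c 2])
    \<and> is_mdns (insert w V) (true_twin_edges E (s r) w) (T @ map s [1..<r+1] @ [w, c 1, c 2])
    \<and> gamma_dns (insert w V) (false_twin_edges E (c r) w)
      = gamma_dns (insert w V) (true_twin_edges E (c r) w)
    \<and> gamma_dns (insert w V) (true_twin_edges E (c r) w) = gamma_dns V E
    \<and> gamma_dns V E = r + 2 + gamma_dns H (induced E H)
    \<and> is_mdns (insert w V) (false_twin_edges E (c r) w) (T @ map s [1..<r+1] @ [c 1, c 2])
    \<and> is_mdns (insert w V) (true_twin_edges E (c r) w) (T @ map s [1..<r+1] @ [c 1, c 2])"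
proof -
  interpret thick_spider_graph V E r s c H by (rule thick_spider_graph.intro[OF spider])
  have len_T: "length T = gamma_dns H (induced E H)" using TH by (simp add: is_mdns_def)
  have G: "is_mdns V E (T @ legs @ [c 1, c 2])"
    using is_mdns_spider[OF _ TH] r3 by simp
  have S_twin: "is_mdns (insert w V) (twin_edges adjacent E (s r) w) (T @ legs @ [w, c 1, c 2])"
    for adjacent using is_mdns_s_twin[OF r3 w_new TH] .
  have C_twin: "is_mdns (insert w V) (twin_edges adjacent E (c r) w) (T @ legs @ [c 1, c 2])"
    for adjacent using is_mdns_c_twin[OF r3 w_new TH] .
  have "false_twin_edges E v w = twin_edges False E v w" "true_twin_edges E v w = twin_edges True E v w"
    for v by (simp_all add: twin_edges_def)
  then show ?thesis
    using G S_twin[of False] S_twin[of True] C_twin[of False] C_twin[of True] len_T length_legs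
    by (simp add: is_mdns_def legs_def)
qed

end
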